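(* Let $e=(1,0)$ and $g(s)=1+|s|^2-2\frac{s_1^2}{|s|}$ for $s=(s_1,s_2)\in\mathbb{R}^2$. Then $$\left|\frac{\varepsilon^2}{2\varepsilon^2+g(e+\varepsilon k)}-\frac{1}{2+k_1^2+2k_3^2}\right|\lesssim\frac{\varepsilon|k|^3}{(1+|k|^2)^2}$$ uniformly over $k=(k_1,k_3)$ with $|k|<\delta/\varepsilon$.
   Context: $\delta\in(0,\frac15)$ is fixed and $\varepsilon>0$. $A\lesssim B$ means $A\le CB$ with a constant $C$ independent of $\varepsilon$ and $k$. *)

theory Defs
  imports "HOL-Analysis.Analysis"
begin

definition e_vec :: "real \<times> real" where
  "e_vec = (1, 0)"

definition g :: "real \<times> real \<Rightarrow> real" where
  "g s = 1 + (norm s)^2 - 2 * (fst s)^2 / norm s"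

end

theory Submission
  imports Defs
begin

(* Write v = \<epsilon> k and r = |e + v|. Since s_1^2 = |s|^2 - s_2^2, g(e + v) = (r - 1)^2 + 2 v_2^2 / r,
   and (r - 1)(r + 1) = 2 v_1 + |v|^2 gives r - 1 = v_1 + O(|v|^2). Hence, for |v| <= 1/5,
   g(e + v) = v_1^2 + 2 v_2^2 + O(|v|^3) and g(e + v) >= |v|^2 / 3. As
   \<epsilon>^2 (2 + k_1^2 + 2 k_3^2) = 2 \<epsilon>^2 + v_1^2 + 2 v_2^2, the difference of the two fractions is
   \<epsilon>^2 times that cubic error over two denominators of order \<epsilon>^2 (1 + |k|^2). *)

lemma g_eq_radial:
  assumes "s \<noteq> 0"
  shows "g s = (norm s - 1)^2 + 2 * (snd s)^2 / norm s"
proof -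
  have "(fst s)^2 = (norm s)^2 - (snd s)^2"
    by (cases s) (simp add: norm_Pair)
  then show ?thesis
    using assms by (simp add: g_def field_simps power2_eq_square)
qed

lemma abs_fst_le_norm: "\<bar>fst v\<bar> \<le> norm (v :: real \<times> real)"
  by (cases v) (simp add: norm_Pair)

lemma abs_snd_le_norm: "\<bar>snd v\<bar> \<le> norm (v :: real \<times> real)"
  by (cases v) (simp add: norm_Pair)

lemma norm_e_vec_add_minus_one: "\<bar>norm (e_vec + v) - 1\<bar> \<le> norm v"
  using norm_triangle_ineq3[of "e_vec + v" e_vec] by (simp add: e_vec_def)

lemma norm_e_vec_add_square: "(norm (e_vec + v))^2 = 1 + 2 * fst v + (norm v)^2"
  by (cases v) (simp add: power2_norm_eq_inner e_vec_def algebra_simps)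

lemma norm_e_vec_add_linearization: "\<bar>norm (e_vec + v) - 1 - fst v\<bar> \<le> 2 * (norm v)^2"
proof -
  define r where "r = norm (e_vec + v)"
  define p where "p = r - 1"
  have p_le: "\<bar>p\<bar> \<le> norm v"
    unfolding p_def r_def by (rule norm_e_vec_add_minus_one)
  have "(fst v - p) * (r + 1) = fst v * p - (norm v)^2"
    using norm_e_vec_add_square[of v]
    by (simp add: p_def r_def[symmetric] power2_eq_square algebra_simps)
  moreover have "\<bar>fst v * p\<bar> \<le> (norm v)^2"
    using abs_fst_le_norm[of v] p_le by (simp add: abs_mult power2_eq_square mult_mono')
  ultimately have "\<bar>fst v - p\<bar> * (r + 1) \<le> 2 * (norm v)^2"
    by (simp add: abs_mult[symmetric] r_def)
  moreover have "\<bar>fst v - p\<bar> \<le> \<bar>fst v - p\<bar> * (r + 1)"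
    by (simp add: r_def algebra_simps)
  ultimately have "\<bar>fst v - p\<bar> \<le> 2 * (norm v)^2"
    by linarith
  then show ?thesis by (simp add: p_def r_def)
qed

lemma g_e_vec_add_radial:
  assumes "norm v < 1"
  shows "g (e_vec + v) = (norm (e_vec + v) - 1)^2 + 2 * (snd v)^2 / norm (e_vec + v)"
proof -
  have "e_vec + v \<noteq> 0"
    using assms norm_e_vec_add_minus_one[of v] by auto
  then show ?thesis
    using g_eq_radial by (simp add: e_vec_def)
qed

lemma g_e_vec_add_expansion:
  assumes small: "norm v \<le> 1/5"
  shows "\<bar>g (e_vec + v) - ((fst v)^2 + 2 * (snd v)^2)\<bar> \<le> 13/2 * (norm v)^3"
proof -
  define r where "r = norm (e_vec + v)"
  define p where "p = r - 1"
  have p_le: "\<bar>p\<bar> \<le> norm v"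
    unfolding p_def r_def by (rule norm_e_vec_add_minus_one)
  have r_ge: "r \<ge> 4/5" using p_le small unfolding p_def by linarith
  have lin: "\<bar>fst v - p\<bar> \<le> 2 * (norm v)^2"
    using norm_e_vec_add_linearization[of v] by (simp add: p_def r_def)
  have "\<bar>fst v + p\<bar> \<le> 2 * norm v"
    using abs_fst_le_norm[of v] p_le by simp
  then have "\<bar>(fst v - p) * (fst v + p)\<bar> \<le> 2 * (norm v)^2 * (2 * norm v)"
    unfolding abs_mult using lin by (intro mult_mono) auto
  then have quad: "\<bar>(fst v)^2 - p^2\<bar> \<le> 4 * (norm v)^3"
    by (simp add: power2_eq_square power3_eq_cube algebra_simps)
  have "\<bar>2 * (snd v)^2 * p / r\<bar> = 2 * (snd v)^2 * \<bar>p\<bar> / r"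
    using r_ge by (simp add: abs_mult)
  also have "\<dots> \<le> 2 * (norm v)^2 * norm v / (4/5)"
    using r_ge p_le power_mono[OF abs_snd_le_norm abs_ge_zero, of v 2]
    by (intro frac_le mult_mono) auto
  finally have cross: "\<bar>2 * (snd v)^2 * p / r\<bar> \<le> 5/2 * (norm v)^3"
    by (simp add: power3_eq_cube power2_eq_square)
  have "g (e_vec + v) = p^2 + 2 * (snd v)^2 / r"
    using g_e_vec_add_radial[of v] small by (simp add: p_def r_def)
  then have "(fst v)^2 + 2 * (snd v)^2 - g (e_vec + v) = ((fst v)^2 - p^2) + 2 * (snd v)^2 * p / r"
    using r_ge by (simp add: p_def field_simps)
  then show ?thesis using quad cross by linarith
qed

lemma g_e_vec_add_lower_bound:
  assumes small: "norm v \<le> 1/5"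
  shows "1/3 * (norm v)^2 \<le> g (e_vec + v)"
proof -
  define r where "r = norm (e_vec + v)"
  define p where "p = r - 1"
  have p_le: "\<bar>p\<bar> \<le> norm v"
    unfolding p_def r_def by (rule norm_e_vec_add_minus_one)
  have r_ge: "r \<ge> 4/5" and r_le: "r \<le> 2" using p_le small unfolding p_def by linarith+
  have lin: "\<bar>fst v - p\<bar> \<le> 2 * (norm v)^2"
    using norm_e_vec_add_linearization[of v] by (simp add: p_def r_def)
  have "(fst v - p)^2 \<le> (2 * (norm v)^2)^2"
    using power_mono[OF lin abs_ge_zero, of 2] by simp
  also have "\<dots> = 4 * (norm v)^2 * (norm v)^2"
    by (simp add: power2_eq_square)
  also have "\<dots> \<le> 4 * (norm v)^2 * (1/5)^2"
    using small by (intro mult_left_mono power_mono) auto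
  moreover have "(fst v)^2 \<le> 2 * p^2 + 2 * (fst v - p)^2"
    using zero_le_power2[of "2 * p - fst v"] by (simp add: power2_eq_square algebra_simps)
  ultimately have "(fst v)^2 / 2 - 4/25 * (norm v)^2 \<le> p^2"
    by (simp add: power2_eq_square)
  moreover have "(snd v)^2 \<le> 2 * (snd v)^2 / r"
    using r_ge r_le by (simp add: field_simps mult_right_mono)
  moreover have "(norm v)^2 = (fst v)^2 + (snd v)^2"
    by (cases v) (simp add: norm_Pair)
  moreover have "g (e_vec + v) = p^2 + 2 * (snd v)^2 / r"
    using g_e_vec_add_radial[of v] small by (simp add: p_def r_def)
  ultimately show ?thesis
    using zero_le_power2[of "fst v"] zero_le_power2[of "snd v"] by linarith
qed

lemma abs_diff_reciprocals_le:
  fixes \<epsilon> K D h a b :: real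
  assumes \<epsilon>: "0 < \<epsilon>" and K: "0 \<le> K" and D: "1 + K^2 \<le> D"
    and b: "0 < b" "b \<le> 2"
    and h_lower: "b * (\<epsilon> * K)^2 \<le> h"
    and h_close: "\<bar>h - \<epsilon>^2 * (D - 2)\<bar> \<le> a * (\<epsilon> * K)^3"
  shows "\<bar>\<epsilon>^2 / (2 * \<epsilon>^2 + h) - 1 / D\<bar> \<le> a / b * (\<epsilon> * K^3 / (1 + K^2)^2)"
proof -
  define G where "G = 2 * \<epsilon>^2 + h"
  define Q where "Q = 1 + K^2"
  have Q_pos: "0 < Q" by (simp add: Q_def add_pos_nonneg)
  have "b * \<epsilon>^2 * Q = b * \<epsilon>^2 + b * (\<epsilon> * K)^2"
    by (simp add: Q_def algebra_simps)
  moreover have "b * \<epsilon>^2 \<le> 2 * \<epsilon>^2"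
    using b by (simp add: mult_right_mono)
  ultimately have G_lower: "b * \<epsilon>^2 * Q \<le> G"
    using h_lower unfolding G_def by linarith
  have G_pos: "0 < G"
    using G_lower Q_pos \<epsilon> b by (smt (verit) mult_pos_pos zero_less_power)
  have D_pos: "0 < D" using D Q_pos Q_def by linarith
  have "\<epsilon>^2 / G - 1 / D = -(h - \<epsilon>^2 * (D - 2)) / (G * D)"
    using G_pos D_pos by (simp add: G_def field_simps)
  then have "\<bar>\<epsilon>^2 / G - 1 / D\<bar> = \<bar>h - \<epsilon>^2 * (D - 2)\<bar> / (G * D)"
    using G_pos D_pos by (simp add: abs_mult)
  also have "\<dots> \<le> a * (\<epsilon> * K)^3 / (b * \<epsilon>^2 * Q * Q)"
    using h_close G_lower G_pos D Q_pos \<epsilon> K b unfolding Q_def[symmetric]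
    by (intro frac_le mult_mono) auto
  also have "\<dots> = a / b * (\<epsilon> * K^3 / Q^2)"
    using \<epsilon> Q_pos b by (simp add: field_simps power2_eq_square power3_eq_cube)
  finally show ?thesis by (simp add: G_def Q_def)
qed

theorem proposition5p2:
  fixes \<delta> :: real
  assumes "0 < \<delta>" and "\<delta> < 1/5"
  shows "\<exists>C. \<forall>\<epsilon>::real. \<forall>k::real \<times> real. 0 < \<epsilon> \<longrightarrow> norm k < \<delta> / \<epsilon> \<longrightarrow>
    \<bar>\<epsilon>^2 / (2 * \<epsilon>^2 + g (e_vec + \<epsilon> *\<^sub>R k)) - 1 / (2 + (fst k)^2 + 2 * (snd k)^2)\<bar>
      \<le> C * (\<epsilon> * (norm k)^3 / (1 + (norm k)^2)^2)"
proof (intro exI allI impI)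
  fix \<epsilon> :: real and k :: "real \<times> real"
  assume \<epsilon>: "0 < \<epsilon>" and k: "norm k < \<delta> / \<epsilon>"
  define v where "v = \<epsilon> *\<^sub>R k"
  have norm_v: "norm v = \<epsilon> * norm k"
    using \<epsilon> by (simp add: v_def)
  have small: "norm v \<le> 1/5"
    using k \<epsilon> assms by (simp add: norm_v field_simps)
  have D: "1 + (norm k)^2 \<le> 2 + (fst k)^2 + 2 * (snd k)^2"
    by (cases k) (simp add: norm_Pair)
  have h_lower: "1/3 * (\<epsilon> * norm k)^2 \<le> g (e_vec + v)"
    using g_e_vec_add_lower_bound[OF small] by (simp add: norm_v)
  have "\<epsilon>^2 * ((2 + (fst k)^2 + 2 * (snd k)^2) - 2) = (fst v)^2 + 2 * (snd v)^2"
    by (simp add: v_def algebra_simps)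
  then have h_close: "\<bar>g (e_vec + v) - \<epsilon>^2 * ((2 + (fst k)^2 + 2 * (snd k)^2) - 2)\<bar>
      \<le> 13/2 * (\<epsilon> * norm k)^3"
    using g_e_vec_add_expansion[OF small] by (simp add: norm_v)
  show "\<bar>\<epsilon>^2 / (2 * \<epsilon>^2 + g (e_vec + \<epsilon> *\<^sub>R k)) - 1 / (2 + (fst k)^2 + 2 * (snd k)^2)\<bar>
      \<le> 39/2 * (\<epsilon> * (norm k)^3 / (1 + (norm k)^2)^2)"
    using abs_diff_reciprocals_le[OF \<epsilon> norm_ge_zero D _ _ h_lower h_close] by (simp add: v_def)
qed

end
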